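(* Let $X$ be a $k$-regular distance regular graph of diameter $d$, and let $Y_i$ be the $i$-th distance digraph of $\mathrm{LD}(X)$. Then: (i) the matrices $S(Y_0),S(Y_1),\dots,S(Y_{d+1})$ are linearly dependent; (ii) for all $i,j\in\{0,1,\dots,d+1\}$, $S(Y_i)S(Y_j)=S(Y_j)S(Y_i)$.
   Context: $X$ is a connected distance regular graph (for vertices $u,v$ at distance $\ell$, the number of vertices at distance $i$ from $u$ and $j$ from $v$ depends only on $i,j,\ell$). Each edge $\{a,b\}$ of $X$ is replaced by arcs $(a,b)$ and $(b,a)$; the line digraph $\mathrm{LD}(X)$ has the arcs as vertices, with an arc from $(a,b)$ to $(c,d)$ iff $b=c$. For a digraph $Y$, its $i$-th distance digraph $Y_i$ has the same vertex set, with $a$ adjacent to $b$ iff the directed distance from $a$ to $b$ in $Y$ is $i$. For a digraph $Z$ with $01$-adjacency matrix $A(Z)$, its skew-adjacency matrix is $S(Z)=A(Z)-A(Z)^T$. *)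

theory Defs
  imports Complex_Main
begin

definition simple_graph :: "'a set \<Rightarrow> ('a \<Rightarrow> 'a \<Rightarrow> bool) \<Rightarrow> bool" where
  "simple_graph V E \<longleftrightarrow> finite V \<and> V \<noteq> {} \<and>
     (\<forall>u v. E u v \<longrightarrow> u \<in> V \<and> v \<in> V) \<and>
     (\<forall>u v. E u v \<longrightarrow> E v u) \<and> (\<forall>u. \<not> E u u)"

definition edge_rel :: "('a \<Rightarrow> 'a \<Rightarrow> bool) \<Rightarrow> ('a \<times> 'a) set" where
  "edge_rel E = {(u, v). E u v}"

definition connected_graph :: "'a set \<Rightarrow> ('a \<Rightarrow> 'a \<Rightarrow> bool) \<Rightarrow> bool" where
  "connected_graph V E \<longleftrightarrow> (\<forall>u\<in>V. \<forall>v\<in>V. \<exists>n. (u, v) \<in> edge_rel E ^^ n)"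

definition gdist :: "('a \<Rightarrow> 'a \<Rightarrow> bool) \<Rightarrow> 'a \<Rightarrow> 'a \<Rightarrow> nat" where
  "gdist E u v = (LEAST n. (u, v) \<in> edge_rel E ^^ n)"

definition regular_graph :: "'a set \<Rightarrow> ('a \<Rightarrow> 'a \<Rightarrow> bool) \<Rightarrow> nat \<Rightarrow> bool" where
  "regular_graph V E k \<longleftrightarrow> (\<forall>v\<in>V. card {w\<in>V. E v w} = k)"

definition distance_regular :: "'a set \<Rightarrow> ('a \<Rightarrow> 'a \<Rightarrow> bool) \<Rightarrow> bool" where
  "distance_regular V E \<longleftrightarrow> simple_graph V E \<and> connected_graph V E \<and>
     (\<forall>u\<in>V. \<forall>v\<in>V. \<forall>u'\<in>V. \<forall>v'\<in>V. gdist E u v = gdist E u' v' \<longrightarrow>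
        (\<forall>i j. card {w\<in>V. gdist E u w = i \<and> gdist E v w = j}
             = card {w\<in>V. gdist E u' w = i \<and> gdist E v' w = j}))"

definition diameter :: "'a set \<Rightarrow> ('a \<Rightarrow> 'a \<Rightarrow> bool) \<Rightarrow> nat" where
  "diameter V E = Max {gdist E u v | u v. u \<in> V \<and> v \<in> V}"

definition arcs :: "('a \<Rightarrow> 'a \<Rightarrow> bool) \<Rightarrow> ('a \<times> 'a) set" where
  "arcs E = {(a, b). E a b}"

definition LD_rel :: "('a \<Rightarrow> 'a \<Rightarrow> bool) \<Rightarrow> (('a \<times> 'a) \<times> ('a \<times> 'a)) set" where
  "LD_rel E = {((a, b), (c, d)). E a b \<and> E c d \<and> b = c}"

definition dist_digraph :: "'b set \<Rightarrow> ('b \<times> 'b) set \<Rightarrow> nat \<Rightarrow> 'b \<Rightarrow> 'b \<Rightarrow> bool" where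
  "dist_digraph W R i x y \<longleftrightarrow> x \<in> W \<and> y \<in> W \<and> (x, y) \<in> R ^^ i \<and> (\<forall>m<i. (x, y) \<notin> R ^^ m)"

definition adj_mat :: "('b \<Rightarrow> 'b \<Rightarrow> bool) \<Rightarrow> 'b \<Rightarrow> 'b \<Rightarrow> real" where
  "adj_mat Z x y = (if Z x y then 1 else 0)"

definition skew_mat :: "('b \<Rightarrow> 'b \<Rightarrow> bool) \<Rightarrow> 'b \<Rightarrow> 'b \<Rightarrow> real" where
  "skew_mat Z x y = adj_mat Z x y - adj_mat Z y x"

definition mat_mult_on :: "'b set \<Rightarrow> ('b \<Rightarrow> 'b \<Rightarrow> real) \<Rightarrow> ('b \<Rightarrow> 'b \<Rightarrow> real) \<Rightarrow> 'b \<Rightarrow> 'b \<Rightarrow> real" where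
  "mat_mult_on W M N x y = (\<Sum>z\<in>W. M x z * N z y)"

definition lin_dependent_mats :: "'b set \<Rightarrow> nat \<Rightarrow> (nat \<Rightarrow> 'b \<Rightarrow> 'b \<Rightarrow> real) \<Rightarrow> bool" where
  "lin_dependent_mats W n M \<longleftrightarrow> (\<exists>c :: nat \<Rightarrow> real. (\<exists>i\<le>n. c i \<noteq> 0) \<and>
      (\<forall>x\<in>W. \<forall>y\<in>W. (\<Sum>i\<le>n. c i * M i x y) = 0))"

end

theory Submission imports Defs begin

text \<open>For an arc \<open>(a, b)\<close>, the arcs reachable from it in exactly \<open>n + 1\<close> steps of LD(X) are the arcs
  \<open>(c, e)\<close> with a walk of length \<open>n\<close> from \<open>b\<close> to \<open>c\<close>. Hence the entry of \<open>S(Y\<^sub>n\<^sub>+\<^sub>1)\<close> at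
  \<open>((a, b), (c, e))\<close> is \<open>D\<^sub>n(b, c) - D\<^sub>n(e, a)\<close>, where \<open>D\<^sub>n\<close> is the \<open>n\<close>-th distance matrix of X, while
  \<open>S(Y\<^sub>0) = 0\<close>, which already gives (i). Multiplying two such matrices and summing over arcs
  \<open>(c, d)\<close>, i.e. over pairs weighted by the adjacency matrix \<open>A = D\<^sub>1\<close> with row sums \<open>k\<close>, expresses
  \<open>S(Y\<^sub>p\<^sub>+\<^sub>1) S(Y\<^sub>q\<^sub>+\<^sub>1)\<close> through the products \<open>D\<^sub>p A D\<^sub>q\<close> and \<open>D\<^sub>p D\<^sub>q\<close>. Distance regularity says precisely
  that the distance matrices commute, so these expressions are symmetric in \<open>p\<close> and \<open>q\<close>.\<close>

lemma edge_rel_relpow_sym: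
  assumes "\<forall>u v. E u v \<longrightarrow> E v u" and "(u, v) \<in> edge_rel E ^^ n"
  shows "(v, u) \<in> edge_rel E ^^ n"
  using assms(2)
proof (induction n arbitrary: v)
  case 0
  then show ?case by simp
next
  case (Suc n)
  then obtain w where w: "(u, w) \<in> edge_rel E ^^ n" "(w, v) \<in> edge_rel E"
    by (auto elim: relpow_Suc_E)
  have "(v, w) \<in> edge_rel E" using w(2) assms(1) by (auto simp: edge_rel_def)
  then show ?case using Suc.IH[OF w(1)] by (rule relpow_Suc_I2)
qed

lemma gdist_commute:
  assumes "\<forall>u v. E u v \<longrightarrow> E v u"
  shows "gdist E u v = gdist E v u"
  unfolding gdist_def using edge_rel_relpow_sym[OF assms] by metis

lemma gdist_eq_iff:
  assumes "\<exists>m. (u, v) \<in> edge_rel E ^^ m"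
  shows "gdist E u v = n \<longleftrightarrow> (u, v) \<in> edge_rel E ^^ n \<and> (\<forall>m<n. (u, v) \<notin> edge_rel E ^^ m)"
proof
  assume "gdist E u v = n"
  then show "(u, v) \<in> edge_rel E ^^ n \<and> (\<forall>m<n. (u, v) \<notin> edge_rel E ^^ m)"
    unfolding gdist_def using assms by (metis LeastI_ex not_less_Least)
next
  assume "(u, v) \<in> edge_rel E ^^ n \<and> (\<forall>m<n. (u, v) \<notin> edge_rel E ^^ m)"
  then show "gdist E u v = n"
    unfolding gdist_def by (intro Least_equality) (auto simp: not_less[symmetric])
qed

lemma connected_graph_walk:
  "connected_graph V E \<Longrightarrow> u \<in> V \<Longrightarrow> v \<in> V \<Longrightarrow> \<exists>n. (u, v) \<in> edge_rel E ^^ n"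
  unfolding connected_graph_def by blast

lemma LD_rel_relpow_Suc_iff:
  "((a, b), (c, e)) \<in> LD_rel E ^^ Suc n \<longleftrightarrow> E a b \<and> E c e \<and> (b, c) \<in> edge_rel E ^^ n"
proof (induction n arbitrary: c e)
  case 0
  then show ?case by (auto simp: LD_rel_def)
next
  case (Suc n)
  have "((a, b), (c, e)) \<in> LD_rel E ^^ Suc (Suc n) \<longleftrightarrow>
        (\<exists>f g. ((a, b), (f, g)) \<in> LD_rel E ^^ Suc n \<and> ((f, g), (c, e)) \<in> LD_rel E)"
    by (simp only: relpow.simps(2) relcomp_unfold) fastforce
  also have "\<dots> \<longleftrightarrow> (\<exists>f g. E a b \<and> E f g \<and> (b, f) \<in> edge_rel E ^^ n \<and> E c e \<and> g = c)"
    using Suc.IH by (auto simp: LD_rel_def)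
  also have "\<dots> \<longleftrightarrow> E a b \<and> E c e \<and> (b, c) \<in> edge_rel E ^^ Suc n"
    by (auto simp: edge_rel_def elim!: relpow_Suc_E intro: relpow_Suc_I)
  finally show ?case .
qed

lemma dist_digraph_LD_Suc_iff:
  assumes "simple_graph V E" and "connected_graph V E"
    and "(a, b) \<in> arcs E" and "(c, e) \<in> arcs E"
  shows "dist_digraph (arcs E) (LD_rel E) (Suc n) (a, b) (c, e) \<longleftrightarrow>
    (a, b) \<noteq> (c, e) \<and> gdist E b c = n"
proof -
  have E: "E a b" "E c e" using assms(3,4) by (auto simp: arcs_def)
  then have "b \<in> V" "c \<in> V" using assms(1) by (auto simp: simple_graph_def)
  then have walk: "\<exists>m. (b, c) \<in> edge_rel E ^^ m" using connected_graph_walk[OF assms(2)] by blast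
  have "dist_digraph (arcs E) (LD_rel E) (Suc n) (a, b) (c, e) \<longleftrightarrow>
      (a, b) \<noteq> (c, e) \<and> (b, c) \<in> edge_rel E ^^ n \<and> (\<forall>m<n. (b, c) \<notin> edge_rel E ^^ m)"
    unfolding dist_digraph_def using assms(3,4) E
    by (auto simp del: relpow.simps(2) simp: LD_rel_relpow_Suc_iff All_less_Suc2)
  also have "\<dots> \<longleftrightarrow> (a, b) \<noteq> (c, e) \<and> gdist E b c = n"
    using gdist_eq_iff[OF walk] by blast
  finally show ?thesis .
qed

lemma skew_mat_dist_digraph_0: "skew_mat (dist_digraph W R 0) x y = 0"
  by (auto simp: skew_mat_def adj_mat_def dist_digraph_def)

definition distance_mat :: "('a \<Rightarrow> 'a \<Rightarrow> bool) \<Rightarrow> nat \<Rightarrow> 'a \<Rightarrow> 'a \<Rightarrow> real" where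
  "distance_mat E n u v = (if gdist E u v = n then 1 else 0)"

lemma distance_mat_commute: "simple_graph V E \<Longrightarrow> distance_mat E n u v = distance_mat E n v u"
  unfolding distance_mat_def simple_graph_def using gdist_commute[of E u v] by auto

lemma distance_mat_1_eq_adjacency:
  assumes "simple_graph V E" and "connected_graph V E" and "u \<in> V" and "v \<in> V"
  shows "distance_mat E 1 u v = (if E u v then 1 else 0)"
proof -
  have "gdist E u v = 1 \<longleftrightarrow> (u, v) \<in> edge_rel E ^^ 1 \<and> (\<forall>m<1. (u, v) \<notin> edge_rel E ^^ m)"
    by (rule gdist_eq_iff[OF connected_graph_walk[OF assms(2-4)]])
  also have "\<dots> \<longleftrightarrow> E u v" using assms(1) by (auto simp: edge_rel_def simple_graph_def)
  finally show ?thesis by (simp add: distance_mat_def)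
qed

lemma skew_mat_dist_digraph_LD_Suc:
  assumes "simple_graph V E" and "connected_graph V E"
    and "(a, b) \<in> arcs E" and "(c, e) \<in> arcs E"
  shows "skew_mat (dist_digraph (arcs E) (LD_rel E) (Suc n)) (a, b) (c, e) =
    distance_mat E n b c - distance_mat E n e a"
  using dist_digraph_LD_Suc_iff[OF assms, of n] dist_digraph_LD_Suc_iff[OF assms(1,2,4,3), of n]
  by (auto simp: skew_mat_def adj_mat_def distance_mat_def)

lemma sum_indicator_eq_card:
  "finite V \<Longrightarrow> (\<Sum>w\<in>V. if P w then 1 else 0 :: real) = real (card {w\<in>V. P w})"
  by (simp add: sum.inter_filter[symmetric])

lemma sum_arcs_eq_adjacency_sum:
  assumes "simple_graph V E"
  shows "(\<Sum>z\<in>arcs E. g z) = (\<Sum>c\<in>V. \<Sum>d\<in>V. (if E c d then 1 else 0) * (g (c, d) :: real))"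
proof -
  have fin: "finite V" using assms by (simp add: simple_graph_def)
  have "arcs E = Sigma V (\<lambda>c. {d\<in>V. E c d})" using assms by (auto simp: arcs_def simple_graph_def)
  then have "(\<Sum>z\<in>arcs E. g z) = (\<Sum>c\<in>V. \<Sum>d\<in>{d\<in>V. E c d}. g (c, d))"
    using fin by (simp add: sum.Sigma)
  also have "\<dots> = (\<Sum>c\<in>V. \<Sum>d\<in>V. (if E c d then 1 else 0) * g (c, d))"
    using fin by (auto simp: sum.inter_filter intro!: sum.cong)
  finally show ?thesis .
qed

lemma sum_adjacency_weighted:
  assumes "simple_graph V E" and "connected_graph V E" and "regular_graph V E k"
  shows "(\<Sum>c\<in>V. \<Sum>d\<in>V. distance_mat E 1 c d * f c) = real k * (\<Sum>c\<in>V. f c)"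
proof -
  have fin: "finite V" using assms(1) by (simp add: simple_graph_def)
  have "(\<Sum>d\<in>V. distance_mat E 1 c d) = real k" if "c \<in> V" for c
  proof -
    have "(\<Sum>d\<in>V. distance_mat E 1 c d) = (\<Sum>d\<in>V. if E c d then 1 else 0)"
      using distance_mat_1_eq_adjacency[OF assms(1,2) that] by simp
    also have "\<dots> = real k"
      using sum_indicator_eq_card[OF fin] assms(3) that by (simp add: regular_graph_def)
    finally show ?thesis .
  qed
  then have "(\<Sum>c\<in>V. f c * (\<Sum>d\<in>V. distance_mat E 1 c d)) = (\<Sum>c\<in>V. f c * real k)"
    by simp
  then show ?thesis by (simp add: sum_distrib_left sum_distrib_right mult.commute)
qed

definition mats_commute_on :: "'b set \<Rightarrow> ('b \<Rightarrow> 'b \<Rightarrow> real) \<Rightarrow> ('b \<Rightarrow> 'b \<Rightarrow> real) \<Rightarrow> bool" where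
  "mats_commute_on W M N \<longleftrightarrow> (\<forall>x\<in>W. \<forall>y\<in>W. mat_mult_on W M N x y = mat_mult_on W N M x y)"

lemma mat_mult_on_assoc:
  "mat_mult_on W (mat_mult_on W M N) L x y = mat_mult_on W M (mat_mult_on W N L) x y"
  unfolding mat_mult_on_def
  by (simp add: sum_distrib_left sum_distrib_right mult.assoc) (rule sum.swap)

lemma mat_mult_on_cong:
  assumes "\<forall>u\<in>W. \<forall>w\<in>W. M u w = M' u w" and "\<forall>u\<in>W. \<forall>w\<in>W. N u w = N' u w"
    and "x \<in> W" and "y \<in> W"
  shows "mat_mult_on W M N x y = mat_mult_on W M' N' x y"
  unfolding mat_mult_on_def using assms by (intro sum.cong) auto

lemma mat_mult_on_rotate:
  assumes "mats_commute_on W M N" and "mats_commute_on W N L" and "mats_commute_on W L M"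
    and "x \<in> W" and "y \<in> W"
  shows "mat_mult_on W M (mat_mult_on W L N) x y = mat_mult_on W N (mat_mult_on W L M) x y"
proof -
  note commute = assms(1-3)[unfolded mats_commute_on_def]
  have "mat_mult_on W M (mat_mult_on W L N) x y = mat_mult_on W M (mat_mult_on W N L) x y"
    using commute assms(4,5) by (intro mat_mult_on_cong) auto
  also have "\<dots> = mat_mult_on W (mat_mult_on W M N) L x y"
    by (rule mat_mult_on_assoc[symmetric])
  also have "\<dots> = mat_mult_on W (mat_mult_on W N M) L x y"
    using commute assms(4,5) by (intro mat_mult_on_cong) auto
  also have "\<dots> = mat_mult_on W N (mat_mult_on W M L) x y"
    by (rule mat_mult_on_assoc)
  also have "\<dots> = mat_mult_on W N (mat_mult_on W L M) x y"
    using commute assms(4,5) by (intro mat_mult_on_cong) auto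
  finally show ?thesis .
qed

text \<open>The \<open>(u, v)\<close> entry of \<open>D\<^sub>p D\<^sub>q\<close> counts the vertices at distance \<open>p\<close> from \<open>u\<close> and \<open>q\<close> from \<open>v\<close>;
  distance regularity applied to the pairs \<open>(u, v)\<close> and \<open>(v, u)\<close> makes this symmetric in \<open>p, q\<close>.\<close>

lemma distance_regular_distance_mats_commute:
  assumes "distance_regular V E"
  shows "mats_commute_on V (distance_mat E p) (distance_mat E q)"
  unfolding mats_commute_on_def
proof (intro ballI)
  fix u v assume u: "u \<in> V" and v: "v \<in> V"
  have fin: "finite V" and sym: "\<forall>u v. E u v \<longrightarrow> E v u"
    using assms by (auto simp: distance_regular_def simple_graph_def)
  have count: "mat_mult_on V (distance_mat E i) (distance_mat E j) u v =
      real (card {w\<in>V. gdist E u w = i \<and> gdist E v w = j})" for i j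
    unfolding mat_mult_on_def distance_mat_def using fin gdist_commute[OF sym, of _ v]
    by (subst sum_indicator_eq_card[symmetric]) (auto intro!: sum.cong)
  have "card {w\<in>V. gdist E u w = q \<and> gdist E v w = p} = card {w\<in>V. gdist E v w = q \<and> gdist E u w = p}"
    using assms u v gdist_commute[OF sym, of u v] unfolding distance_regular_def by blast
  also have "{w\<in>V. gdist E v w = q \<and> gdist E u w = p} = {w\<in>V. gdist E u w = p \<and> gdist E v w = q}"
    by blast
  finally show "mat_mult_on V (distance_mat E p) (distance_mat E q) u v =
      mat_mult_on V (distance_mat E q) (distance_mat E p) u v"
    using count by simp
qed

lemma skew_mat_LD_product:
  fixes p q :: nat
  assumes "distance_regular V E" and "regular_graph V E k"
    and "(a, b) \<in> arcs E" and "(c', e') \<in> arcs E"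
  defines "S \<equiv> (\<lambda>i. skew_mat (dist_digraph (arcs E) (LD_rel E) i))"
    and "P \<equiv> distance_mat E p" and "Q \<equiv> distance_mat E q" and "A \<equiv> distance_mat E 1"
  shows "mat_mult_on (arcs E) (S (Suc p)) (S (Suc q)) (a, b) (c', e') =
     mat_mult_on V P (mat_mult_on V A Q) b c' - real k * mat_mult_on V P Q b e'
     - real k * mat_mult_on V P Q a c' + mat_mult_on V Q (mat_mult_on V A P) e' a"
proof -
  have sg: "simple_graph V E" and cg: "connected_graph V E"
    using assms(1) by (auto simp: distance_regular_def)
  have sym: "P u v = P v u" "Q u v = Q v u" "A u v = A v u" for u v
    unfolding P_def Q_def A_def using distance_mat_commute[OF sg] by blast+
  have "mat_mult_on (arcs E) (S (Suc p)) (S (Suc q)) (a, b) (c', e') =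
      (\<Sum>z\<in>arcs E. (P b (fst z) - P (snd z) a) * (Q (snd z) c' - Q e' (fst z)))"
    unfolding mat_mult_on_def S_def P_def Q_def
    by (intro sum.cong refl)
      (auto simp: skew_mat_dist_digraph_LD_Suc[OF sg cg assms(3)] skew_mat_dist_digraph_LD_Suc[OF sg cg _ assms(4)])
  also have "\<dots> = (\<Sum>c\<in>V. \<Sum>d\<in>V. A c d * ((P b c - P d a) * (Q d c' - Q e' c)))"
    unfolding sum_arcs_eq_adjacency_sum[OF sg] A_def
    using distance_mat_1_eq_adjacency[OF sg cg] by (intro sum.cong refl) auto
  also have "\<dots> = (\<Sum>c\<in>V. \<Sum>d\<in>V. A c d * P b c * Q d c') - (\<Sum>c\<in>V. \<Sum>d\<in>V. A c d * (P b c * Q e' c))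
      - (\<Sum>c\<in>V. \<Sum>d\<in>V. A c d * (P a c * Q c c')) + (\<Sum>c\<in>V. \<Sum>d\<in>V. A c d * P d a * Q e' c)"
  proof -
    have "(\<Sum>c\<in>V. \<Sum>d\<in>V. A c d * P d a * Q d c') = (\<Sum>c\<in>V. \<Sum>d\<in>V. A c d * (P a c * Q c c'))"
      by (subst sum.swap) (simp add: sym mult.assoc)
    then show ?thesis by (simp add: sum_subtractf sum.distrib algebra_simps)
  qed
  also have "(\<Sum>c\<in>V. \<Sum>d\<in>V. A c d * (P b c * Q e' c)) = real k * mat_mult_on V P Q b e'"
    using sum_adjacency_weighted[OF sg cg assms(2), of "\<lambda>c. P b c * Q e' c"]
    unfolding mat_mult_on_def A_def by (simp add: sym(2)[of e'])
  also have "(\<Sum>c\<in>V. \<Sum>d\<in>V. A c d * (P a c * Q c c')) = real k * mat_mult_on V P Q a c'"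
    using sum_adjacency_weighted[OF sg cg assms(2), of "\<lambda>c. P a c * Q c c'"]
    unfolding mat_mult_on_def A_def by simp
  also have "(\<Sum>c\<in>V. \<Sum>d\<in>V. A c d * P b c * Q d c') = mat_mult_on V P (mat_mult_on V A Q) b c'"
    unfolding mat_mult_on_def by (simp add: sum_distrib_left algebra_simps)
  also have "(\<Sum>c\<in>V. \<Sum>d\<in>V. A c d * P d a * Q e' c) = mat_mult_on V Q (mat_mult_on V A P) e' a"
    unfolding mat_mult_on_def by (simp add: sum_distrib_left algebra_simps)
  finally show ?thesis .
qed

theorem corollary4p4:
  fixes V :: "'a set" and E :: "'a \<Rightarrow> 'a \<Rightarrow> bool" and k d :: nat
  assumes "distance_regular V E"
    and "regular_graph V E k"
    and "d = diameter V E"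
  defines "S \<equiv> (\<lambda>i. skew_mat (dist_digraph (arcs E) (LD_rel E) i))"
  shows "lin_dependent_mats (arcs E) (d + 1) S \<and>
    (\<forall>i\<le>d + 1. \<forall>j\<le>d + 1. \<forall>x\<in>arcs E. \<forall>y\<in>arcs E.
           mat_mult_on (arcs E) (S i) (S j) x y = mat_mult_on (arcs E) (S j) (S i) x y)"
proof
  have S0: "S 0 x y = 0" for x y unfolding S_def by (rule skew_mat_dist_digraph_0)
  show "lin_dependent_mats (arcs E) (d + 1) S"
    unfolding lin_dependent_mats_def
    by (rule exI[of _ "\<lambda>i. if i = 0 then 1 else 0"]) (auto intro!: sum.neutral simp: S0)
  have "mat_mult_on (arcs E) (S i) (S j) (a, b) (c, e) = mat_mult_on (arcs E) (S j) (S i) (a, b) (c, e)"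
    if x: "(a, b) \<in> arcs E" and y: "(c, e) \<in> arcs E" for i j a b c e
  proof (cases i; cases j)
    fix p q assume ij: "i = Suc p" "j = Suc q"
    have "a \<in> V" "b \<in> V" "c \<in> V" "e \<in> V"
      using x y assms(1) by (auto simp: arcs_def distance_regular_def simple_graph_def)
    moreover note commute = distance_regular_distance_mats_commute[OF assms(1)]
    ultimately show ?thesis
      using skew_mat_LD_product[OF assms(1,2) x y, of p q] skew_mat_LD_product[OF assms(1,2) x y, of q p]
        mat_mult_on_rotate[OF commute commute commute, of b c] mat_mult_on_rotate[OF commute commute commute, of e a]
        commute[of p q, unfolded mats_commute_on_def]
      unfolding ij S_def by simp
  qed (auto simp: mat_mult_on_def S0)
  then show "\<forall>i\<le>d + 1. \<forall>j\<le>d + 1. \<forall>x\<in>arcs E. \<forall>y\<in>arcs E.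
      mat_mult_on (arcs E) (S i) (S j) x y = mat_mult_on (arcs E) (S j) (S i) x y"
    by (simp add: split_paired_all)
qed

end
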